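(* Let $n\ge7$ and $\mathcal{A}\in\hat{\mathcal{T}}_n$. Then the automorphisms of $\mathcal{A}$ are exactly the linear maps $\varphi$ with $\varphi(e_1)=e_1+\alpha e_n$, $\varphi(e_2)=e_2+\beta e_n$, $\varphi(e_i)=e_i$ for $3\le i\le n$, where $\alpha,\beta\in\mathbb{C}$.
   Context: Over $\mathbb{C}$, basis $e_1,\dots,e_n$, $e_ie_j=\sum_kc_{ij}^ke_k$. For $n\ge3$, $\mathcal{T}'_n$ is the family of anticommutative algebra structures with $c_{ij}^k=0$ whenever $k\le\max\{i,j\}$ and $e_ie_{i+1}=e_{i+2}$ for $1\le i\le n-2$, other constants arbitrary subject to anticommutativity. For $n\ge7$, $\hat{\mathcal{T}}_n$ is the subfamily of $\mathcal{T}'_n$ with $c_{13}^4=c_{14}^5=c_{15}^6=c_{24}^5=c_{25}^6=c_{14}^6=c_{24}^6=c_{13}^6=0$, $c_{35}^6=1$ and $c_{13}^5c_{46}^7\ne0$. *)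

theory Defs
  imports Complex_Main
begin

text \<open>An n-dimensional complex algebra with basis e_1,...,e_n is given by structure
constants c i j k (e_i e_j = sum_k c i j k e_k), indices ranging over {1..n}.\<close>

definition vecs :: "nat \<Rightarrow> (nat \<Rightarrow> complex) set" where
  "vecs n = {v. \<forall>i. i \<notin> {1..n} \<longrightarrow> v i = 0}"

definition basis_vec :: "nat \<Rightarrow> nat \<Rightarrow> complex" where
  "basis_vec i = (\<lambda>k. if k = i then 1 else 0)"

definition alg_mult :: "nat \<Rightarrow> (nat \<Rightarrow> nat \<Rightarrow> nat \<Rightarrow> complex)
    \<Rightarrow> (nat \<Rightarrow> complex) \<Rightarrow> (nat \<Rightarrow> complex) \<Rightarrow> (nat \<Rightarrow> complex)" where
  "alg_mult n c x y = (\<lambda>k. if k \<in> {1..n}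
      then (\<Sum>i\<in>{1..n}. \<Sum>j\<in>{1..n}. x i * y j * c i j k) else 0)"

text \<open>The linear map with matrix M: phi(e_j) = sum_i M i j e_i.\<close>
definition lin_map :: "nat \<Rightarrow> (nat \<Rightarrow> nat \<Rightarrow> complex)
    \<Rightarrow> (nat \<Rightarrow> complex) \<Rightarrow> (nat \<Rightarrow> complex)" where
  "lin_map n M x = (\<lambda>i. if i \<in> {1..n} then (\<Sum>j\<in>{1..n}. M i j * x j) else 0)"

definition is_automorphism :: "nat \<Rightarrow> (nat \<Rightarrow> nat \<Rightarrow> nat \<Rightarrow> complex)
    \<Rightarrow> (nat \<Rightarrow> nat \<Rightarrow> complex) \<Rightarrow> bool" where
  "is_automorphism n c M \<longleftrightarrow>
     bij_betw (lin_map n M) (vecs n) (vecs n) \<and>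
     (\<forall>x\<in>vecs n. \<forall>y\<in>vecs n.
        lin_map n M (alg_mult n c x y) = alg_mult n c (lin_map n M x) (lin_map n M y))"

definition in_T' :: "nat \<Rightarrow> (nat \<Rightarrow> nat \<Rightarrow> nat \<Rightarrow> complex) \<Rightarrow> bool" where
  "in_T' n c \<longleftrightarrow> 3 \<le> n \<and>
     (\<forall>i\<in>{1..n}. \<forall>j\<in>{1..n}. \<forall>k\<in>{1..n}. c i j k = - c j i k) \<and>
     (\<forall>i\<in>{1..n}. \<forall>j\<in>{1..n}. \<forall>k\<in>{1..n}. k \<le> max i j \<longrightarrow> c i j k = 0) \<and>
     (\<forall>i. 1 \<le> i \<and> i \<le> n - 2 \<longrightarrow>
        (\<forall>k\<in>{1..n}. c i (i+1) k = (if k = i + 2 then 1 else 0)))"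

definition in_T_hat :: "nat \<Rightarrow> (nat \<Rightarrow> nat \<Rightarrow> nat \<Rightarrow> complex) \<Rightarrow> bool" where
  "in_T_hat n c \<longleftrightarrow> 7 \<le> n \<and> in_T' n c \<and>
     c 1 3 4 = 0 \<and> c 1 4 5 = 0 \<and> c 1 5 6 = 0 \<and> c 2 4 5 = 0 \<and> c 2 5 6 = 0 \<and>
     c 1 4 6 = 0 \<and> c 2 4 6 = 0 \<and> c 1 3 6 = 0 \<and> c 3 5 6 = 1 \<and>
     c 1 3 5 * c 4 6 7 \<noteq> 0"

end

theory Submission
  imports Defs
begin

(* Since e_i e_(i+1) = e_(i+2) and a product e_p e_q only involves
   basis vectors e_k with k > max p q, multiplicativity determines column i+2 of M from columns i
   and i+1: the columns j \<ge> 3 vanish above the diagonal and the diagonal entries obey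
   d_(k+2) = d_k d_(k+1). The extra conditions defining the family, read off in the products among
   e_1, ..., e_7, force the upper left 2x2 block of M to be the identity and d_3 = d_4 = 1, hence
   all d_k = 1. Induction on the row index then shows that all columns are unit vectors, except that
   the last row is free in columns 1 and 2. Conversely, e_n annihilates everything and no product
   has an e_1- or e_2-component, so adding multiples of e_n to e_1 and e_2 is an automorphism. *)

lemma sum_eq_single_term:
  assumes "finite S" "a \<in> S" "\<And>x. x \<in> S \<Longrightarrow> x \<noteq> a \<Longrightarrow> f x = 0"
  shows "sum f S = (f a :: 'a :: comm_monoid_add)"
  using assms sum.mono_neutral_right[of S "{a}" f] by auto

lemma sum_eq_two_terms:
  assumes "finite S" "a \<in> S" "b \<in> S" "a \<noteq> b"
    "\<And>x. x \<in> S \<Longrightarrow> x \<noteq> a \<Longrightarrow> x \<noteq> b \<Longrightarrow> f x = 0"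
  shows "sum f S = (f a + f b :: 'a :: comm_monoid_add)"
  using assms sum.mono_neutral_right[of S "{a, b}" f] by auto

definition shear_matrix :: "nat \<Rightarrow> complex \<Rightarrow> complex \<Rightarrow> nat \<Rightarrow> nat \<Rightarrow> complex" where
  "shear_matrix n \<alpha> \<beta> i j = (if i = j then 1
     else if i = n \<and> j = 1 then \<alpha> else if i = n \<and> j = 2 then \<beta> else 0)"

lemma basis_vec_in_vecs: "i \<in> {1..n} \<Longrightarrow> basis_vec i \<in> vecs n"
  by (auto simp: basis_vec_def vecs_def)

lemma lin_map_in_vecs: "lin_map n M x \<in> vecs n"
  by (simp add: lin_map_def vecs_def)

lemma lin_map_cong:
  "(\<And>i j. i \<in> {1..n} \<Longrightarrow> j \<in> {1..n} \<Longrightarrow> M i j = M' i j) \<Longrightarrow> lin_map n M = lin_map n M'"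
  by (simp add: lin_map_def fun_eq_iff)

lemma is_automorphism_cong:
  assumes "\<And>i j. i \<in> {1..n} \<Longrightarrow> j \<in> {1..n} \<Longrightarrow> M i j = M' i j"
  shows "is_automorphism n c M \<longleftrightarrow> is_automorphism n c M'"
  using lin_map_cong[OF assms] by (simp add: is_automorphism_def)

lemma lin_map_basis_vec:
  "i \<in> {1..n} \<Longrightarrow> lin_map n M (basis_vec i) = (\<lambda>t. if t \<in> {1..n} then M t i else 0)"
  by (simp add: lin_map_def basis_vec_def if_distrib[of "(*) _"] if_distrib[of "\<lambda>x. x * _"] cong: if_cong)

lemma alg_mult_basis_vec:
  "i \<in> {1..n} \<Longrightarrow> j \<in> {1..n} \<Longrightarrow>
    alg_mult n c (basis_vec i) (basis_vec j) = (\<lambda>k. if k \<in> {1..n} then c i j k else 0)"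
  by (simp add: alg_mult_def basis_vec_def if_distrib[of "(*) _"] if_distrib[of "\<lambda>x. x * _"] cong: if_cong)

lemma lin_map_shear_matrix:
  assumes "3 \<le> n"
  shows "lin_map n (shear_matrix n \<alpha> \<beta>) x =
    (\<lambda>i. if i \<in> {1..n} then x i + (if i = n then \<alpha> * x 1 + \<beta> * x 2 else 0) else 0)"
proof
  fix i
  have "shear_matrix n \<alpha> \<beta> i j * x j =
      (if j = i then x j else 0) + (if j = 1 then (if i = n then \<alpha> * x j else 0) else 0)
        + (if j = 2 then (if i = n then \<beta> * x j else 0) else 0)" for j
    using assms by (auto simp: shear_matrix_def)
  then have "(\<Sum>j\<in>{1..n}. shear_matrix n \<alpha> \<beta> i j * x j) =
      (if i \<in> {1..n} then x i else 0) + (if i = n then \<alpha> * x 1 + \<beta> * x 2 else 0)"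
    using assms by (simp add: sum.distrib)
  then show "lin_map n (shear_matrix n \<alpha> \<beta>) x i =
      (if i \<in> {1..n} then x i + (if i = n then \<alpha> * x 1 + \<beta> * x 2 else 0) else 0)"
    using assms by (simp add: lin_map_def)
qed

lemma shear_matrix_inverse:
  assumes "3 \<le> n" "x \<in> vecs n"
  shows "lin_map n (shear_matrix n (- \<alpha>) (- \<beta>)) (lin_map n (shear_matrix n \<alpha> \<beta>) x) = x"
  using assms by (auto simp: lin_map_shear_matrix vecs_def fun_eq_iff)

lemma small_nat_intervals:
  "{1..<3::nat} = {1, 2}" "{1..<4::nat} = {1, 2, 3}" "{1..<5::nat} = {1, 2, 3, 4}"
  "{1..<6::nat} = {1, 2, 3, 4, 5}" "{1..<7::nat} = {1, 2, 3, 4, 5, 6}"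
  "{1..3::nat} = {1, 2, 3}" "{1..4::nat} = {1, 2, 3, 4}" "{1..5::nat} = {1, 2, 3, 4, 5}"
  "{1..6::nat} = {1, 2, 3, 4, 5, 6}" "{1..7::nat} = {1, 2, 3, 4, 5, 6, 7}"
  by auto

locale T'_algebra =
  fixes n :: nat and c :: "nat \<Rightarrow> nat \<Rightarrow> nat \<Rightarrow> complex"
  assumes in_T': "in_T' n c"
begin

lemma dim_ge_3: "3 \<le> n"
  using in_T' by (simp add: in_T'_def)

lemma anticomm: "i \<in> {1..n} \<Longrightarrow> j \<in> {1..n} \<Longrightarrow> k \<in> {1..n} \<Longrightarrow> c i j k = - c j i k"
  using in_T' unfolding in_T'_def by blast

lemma product_above_factors:
  "i \<in> {1..n} \<Longrightarrow> j \<in> {1..n} \<Longrightarrow> k \<in> {1..n} \<Longrightarrow> k \<le> max i j \<Longrightarrow> c i j k = 0"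
  using in_T' unfolding in_T'_def by blast

lemma consecutive_product:
  assumes "1 \<le> i" "i + 2 \<le> n" "k \<in> {1..n}"
  shows "c i (i+1) k = (if k = i + 2 then 1 else 0)"
proof -
  have "i \<le> n - 2" using assms(2) by arith
  then show ?thesis using in_T' assms(1,3) unfolding in_T'_def by blast
qed

lemma square_zero: "i \<in> {1..n} \<Longrightarrow> k \<in> {1..n} \<Longrightarrow> c i i k = 0"
  using anticomm[of i i k] by simp

lemma products_avoid_first_two:
  assumes "i \<in> {1..n}" "j \<in> {1..n}" "k \<in> {1, 2}"
  shows "c i j k = 0"
proof (cases "i = 1 \<and> j = 1")
  case True
  then show ?thesis using assms dim_ge_3 square_zero by auto
next
  case False
  then show ?thesis using assms dim_ge_3 by (intro product_above_factors) auto
qed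

lemma alg_mult_first_two: "k \<in> {1, 2} \<Longrightarrow> alg_mult n c x y k = 0"
  using dim_ge_3 products_avoid_first_two by (auto simp: alg_mult_def intro!: sum.neutral)

lemma alg_mult_ignores_last:
  assumes "\<And>i. i \<in> {1..<n} \<Longrightarrow> x' i = x i" "\<And>i. i \<in> {1..<n} \<Longrightarrow> y' i = y i"
  shows "alg_mult n c x' y' = alg_mult n c x y"
proof -
  have "x' p * y' q * c p q k = x p * y q * c p q k" if "p \<in> {1..n}" "q \<in> {1..n}" "k \<in> {1..n}" for p q k
    using that assms product_above_factors[of p q k] by (cases "p = n \<or> q = n") auto
  then show ?thesis by (auto simp: alg_mult_def fun_eq_iff intro!: sum.cong)
qed

lemma shear_matrix_automorphism: "is_automorphism n c (shear_matrix n \<alpha> \<beta>)"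
proof -
  let ?S = "lin_map n (shear_matrix n \<alpha> \<beta>)"
  have "bij_betw ?S (vecs n) (vecs n)"
    by (rule bij_betw_byWitness[where f' = "lin_map n (shear_matrix n (- \<alpha>) (- \<beta>))"])
      (use dim_ge_3 shear_matrix_inverse[of n _ "- \<alpha>" "- \<beta>"] in \<open>auto simp: shear_matrix_inverse lin_map_in_vecs\<close>)
  moreover have "?S (alg_mult n c x y) = alg_mult n c (?S x) (?S y)" for x y
  proof -
    have "alg_mult n c (?S x) (?S y) = alg_mult n c x y"
      by (rule alg_mult_ignores_last) (simp_all add: lin_map_shear_matrix[OF dim_ge_3])
    moreover have "?S (alg_mult n c x y) = alg_mult n c x y"
      using alg_mult_first_two[of 1 x y] alg_mult_first_two[of 2 x y]
      by (auto simp: lin_map_shear_matrix[OF dim_ge_3] fun_eq_iff alg_mult_def)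
    ultimately show ?thesis by simp
  qed
  ultimately show ?thesis by (simp add: is_automorphism_def)
qed

end

locale T'_endomorphism = T'_algebra +
  fixes M :: "nat \<Rightarrow> nat \<Rightarrow> complex"
  assumes multiplicative: "x \<in> vecs n \<Longrightarrow> y \<in> vecs n \<Longrightarrow>
    lin_map n M (alg_mult n c x y) = alg_mult n c (lin_map n M x) (lin_map n M y)"
begin

lemma structure_eq:
  assumes "i \<in> {1..n}" "j \<in> {1..n}" "t \<in> {1..n}"
  shows "(\<Sum>k\<in>{1..n}. M t k * c i j k) = (\<Sum>p\<in>{1..n}. \<Sum>q\<in>{1..n}. M p i * M q j * c p q t)"
proof -
  have "lin_map n M (alg_mult n c (basis_vec i) (basis_vec j)) t =
      alg_mult n c (lin_map n M (basis_vec i)) (lin_map n M (basis_vec j)) t"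
    using multiplicative basis_vec_in_vecs assms by simp
  then show ?thesis
    using assms unfolding alg_mult_basis_vec[OF assms(1,2)] lin_map_basis_vec[OF assms(1)]
      lin_map_basis_vec[OF assms(2)]
    by (simp add: lin_map_def alg_mult_def cong: sum.cong_simp)
qed

lemma structure_eq_below:
  assumes "i \<in> {1..n}" "j \<in> {1..n}" "t \<in> {1..n}"
  shows "(\<Sum>k\<in>{1..n}. M t k * c i j k) = (\<Sum>p\<in>{1..<t}. \<Sum>q\<in>{1..<t}. M p i * M q j * c p q t)"
proof -
  have "(\<Sum>p\<in>{1..n}. \<Sum>q\<in>{1..n}. M p i * M q j * c p q t) =
      (\<Sum>p\<in>{1..<t}. \<Sum>q\<in>{1..n}. M p i * M q j * c p q t)"
    using assms by (intro sum.mono_neutral_right) (auto intro!: sum.neutral simp: product_above_factors)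
  also have "\<dots> = (\<Sum>p\<in>{1..<t}. \<Sum>q\<in>{1..<t}. M p i * M q j * c p q t)"
    using assms by (intro sum.cong refl sum.mono_neutral_right) (auto simp: product_above_factors)
  finally show ?thesis using structure_eq[OF assms] by simp
qed

lemma column_recursion:
  assumes "1 \<le> i" "i + 2 \<le> n" "t \<in> {1..n}"
  shows "M t (i+2) = (\<Sum>p\<in>{1..<t}. \<Sum>q\<in>{1..<t}. M p i * M q (i+1) * c p q t)"
proof -
  have "(\<Sum>k\<in>{1..n}. M t k * c i (i+1) k) = (\<Sum>k\<in>{1..n}. if k = i + 2 then M t k else 0)"
    using assms consecutive_product by (intro sum.cong) auto
  also have "\<dots> = M t (i+2)" using assms by simp
  finally show ?thesis using structure_eq_below[of i "i+1" t] assms by simp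
qed

lemma above_diagonal_zero: "3 \<le> j \<Longrightarrow> j \<le> n \<Longrightarrow> 1 \<le> t \<Longrightarrow> t < j \<Longrightarrow> M t j = 0"
proof (induction j arbitrary: t rule: less_induct)
  case (less j)
  have "M t j = (\<Sum>p\<in>{1..<t}. \<Sum>q\<in>{1..<t}. M p (j-2) * M q (j-1) * c p q t)"
    using column_recursion[of "j-2" t] less.prems by (simp add: Suc_diff_Suc numeral_2_eq_2)
  also have "\<dots> = 0"
  proof (intro sum.neutral ballI)
    fix p q assume pq: "p \<in> {1..<t}" "q \<in> {1..<t}"
    show "M p (j-2) * M q (j-1) * c p q t = 0"
    proof (cases "j = 3")
      case True
      then have "p = 1" "q = 1" using pq less.prems by auto
      then show ?thesis using square_zero[of 1 t] less.prems by simp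
    next
      case False
      then show ?thesis using less.IH[of "j-1" q] pq less.prems by auto
    qed
  qed
  finally show ?case .
qed

lemma structure_eq_upto:
  assumes "i \<in> {1..n}" "j \<in> {1..n}" "t \<in> {1..n}" "2 \<le> t"
  shows "(\<Sum>k\<in>{1..t}. M t k * c i j k) = (\<Sum>p\<in>{1..<t}. \<Sum>q\<in>{1..<t}. M p i * M q j * c p q t)"
proof -
  have "(\<Sum>k\<in>{1..n}. M t k * c i j k) = (\<Sum>k\<in>{1..t}. M t k * c i j k)"
    using assms by (intro sum.mono_neutral_right) (auto simp: above_diagonal_zero)
  then show ?thesis using structure_eq_below[OF assms(1-3)] by simp
qed

lemma diagonal_recursion:
  assumes "3 \<le> k" "k + 2 \<le> n"
  shows "M (k+2) (k+2) = M k k * M (k+1) (k+1)"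
proof -
  have "M (k+2) (k+2) = (\<Sum>p\<in>{1..<k+2}. \<Sum>q\<in>{1..<k+2}. M p k * M q (k+1) * c p q (k+2))"
    using column_recursion assms by simp
  also have "\<dots> = (\<Sum>p\<in>{1..<k+2}. M p k * M (k+1) (k+1) * c p (k+1) (k+2))"
    by (intro sum.cong refl sum_eq_single_term) (use assms above_diagonal_zero[of "k+1"] in auto)
  also have "\<dots> = M k k * M (k+1) (k+1) * c k (k+1) (k+2)"
  proof (rule sum_eq_single_term)
    fix p assume p: "p \<in> {1..<k+2}" "p \<noteq> k"
    then consider "p < k" | "p = k + 1" by fastforce
    then show "M p k * M (k+1) (k+1) * c p (k+1) (k+2) = 0"
      by cases (use assms p above_diagonal_zero[of k p] square_zero[of "k+1" "k+2"] in auto)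
  qed (use assms in auto)
  also have "c k (k+1) (k+2) = 1" using assms consecutive_product by simp
  finally show ?thesis by simp
qed

lemma diagonal_nonzero:
  assumes "M n n \<noteq> 0" "5 \<le> n"
  shows "3 \<le> k \<Longrightarrow> k \<le> n \<Longrightarrow> M k k \<noteq> 0"
proof (induction "n - k" arbitrary: k rule: less_induct)
  case less
  consider "k + 2 \<le> n" | "k = n - 1" | "k = n"
    using less.prems by linarith
  then show ?case
  proof cases
    case 1
    then show ?thesis
      using diagonal_recursion[of k] less.hyps[of "k+2"] less.prems by auto
  next
    case 2
    have "n - 2 + 2 = n" "n - 2 + 1 = k" using 2 assms(2) by auto
    then have "M n n = M (n-2) (n-2) * M k k"
      using diagonal_recursion[of "n-2"] assms(2) by simp
    then show ?thesis using assms(1) by auto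
  next
    case 3
    then show ?thesis using assms(1) by simp
  qed
qed

lemma diagonal_one:
  assumes "M 3 3 = 1" "M 4 4 = 1"
  shows "3 \<le> k \<Longrightarrow> k \<le> n \<Longrightarrow> M k k = 1"
proof (induction k rule: less_induct)
  case (less k)
  show ?case
  proof (cases "k \<le> 4")
    case True
    then have "k = 3 \<or> k = 4" using less.prems by auto
    then show ?thesis using assms by auto
  next
    case False
    have "k - 2 + 2 = k" "k - 2 + 1 = k - 1" using False by auto
    then have "M k k = M (k-2) (k-2) * M (k-1) (k-1)"
      using diagonal_recursion[of "k-2"] False less.prems by simp
    then show ?thesis using less.IH[of "k-2"] less.IH[of "k-1"] False less.prems by auto
  qed
qed

lemma unit_column_step:
  assumes "1 \<le> a" "a + 2 \<le> n" "t \<in> {1..n}" "a + 1 < t"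
    and "\<And>p. p \<in> {1..<t} \<Longrightarrow> M p a = (if p = a then 1 else 0)"
    and "\<And>p. p \<in> {1..<t} \<Longrightarrow> M p (a+1) = (if p = a + 1 then 1 else 0)"
  shows "M t (a+2) = (if t = a + 2 then 1 else 0)"
proof -
  have "M t (a+2) = (\<Sum>p\<in>{1..<t}. \<Sum>q\<in>{1..<t}. M p a * M q (a+1) * c p q t)"
    using column_recursion assms by simp
  also have "\<dots> = (\<Sum>p\<in>{1..<t}. M p a * M (a+1) (a+1) * c p (a+1) t)"
    by (intro sum.cong refl sum_eq_single_term) (use assms in auto)
  also have "\<dots> = M a a * M (a+1) (a+1) * c a (a+1) t"
    by (intro sum_eq_single_term) (use assms in auto)
  also have "\<dots> = c a (a+1) t"
    using assms by simp
  also have "\<dots> = (if t = a + 2 then 1 else 0)"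
    using assms consecutive_product by simp
  finally show ?thesis .
qed

lemma last_diagonal_nonzero:
  assumes "inj_on (lin_map n M) (vecs n)"
  shows "M n n \<noteq> 0"
proof
  assume "M n n = 0"
  have "lin_map n M (basis_vec n) = (\<lambda>t. if t \<in> {1..n} then M t n else 0)"
    using dim_ge_3 by (simp add: lin_map_basis_vec)
  also have "\<dots> = lin_map n M (\<lambda>_. 0)"
    using \<open>M n n = 0\<close> above_diagonal_zero[of n] dim_ge_3 by (auto simp: lin_map_def fun_eq_iff le_less)
  finally have "basis_vec n = (\<lambda>_. 0)"
    using assms basis_vec_in_vecs[of n n] dim_ge_3 by (auto simp: vecs_def inj_on_def)
  then show False by (metis basis_vec_def zero_neq_one)
qed

definition columns12_unit_above :: "nat \<Rightarrow> bool" where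
  "columns12_unit_above m \<longleftrightarrow> (\<forall>j\<in>{1, 2}. \<forall>p\<in>{1..<m}. M p j = (if p = j then 1 else 0))"

context
  assumes unit_diagonal: "\<And>k. 3 \<le> k \<Longrightarrow> k \<le> n \<Longrightarrow> M k k = 1"
begin

lemma columns_unit_above:
  assumes "columns12_unit_above m"
  shows "3 \<le> k \<Longrightarrow> k \<le> n \<Longrightarrow> t \<in> {1..n} \<Longrightarrow> t \<le> max m k \<Longrightarrow> M t k = (if t = k then 1 else 0)"
proof (induction k arbitrary: t rule: less_induct)
  case (less k)
  show ?case
  proof (cases "t \<le> k")
    case True
    then show ?thesis using above_diagonal_zero[of k t] unit_diagonal[of k] less.prems by fastforce
  next
    case False
    then have t: "k < t" "t \<le> m" using less.prems by auto
    have unit: "M p i = (if p = i then 1 else 0)" if "p \<in> {1..<t}" "i \<in> {k-2, k-1}" for p i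
    proof (cases "i \<le> 2")
      case True
      then have "i \<in> {1, 2}" "p \<in> {1..<m}" using that t less.prems by auto
      then show ?thesis using assms by (auto simp: columns12_unit_above_def)
    next
      case False
      then show ?thesis using less.IH[of i p] that t less.prems by auto
    qed
    have "k - 2 + 2 = k" "k - 2 + 1 = k - 1" using less.prems by auto
    then show ?thesis
      using unit_column_step[of "k-2" t] unit t less.prems by simp
  qed
qed

(* Compare the e_(m+2)-coordinates of \<phi>(e_j e_(m+1)) = \<phi>(e_j) \<phi>(e_(m+1)): the only contribution
   not already known is M m j * c m (m+1) (m+2) = M m j. *)
lemma columns12_vanish_in_row:
  assumes "columns12_unit_above m" "3 \<le> m" "m + 2 \<le> n" "j \<in> {1, 2}"
  shows "M m j = 0"
proof -
  have unit: "M q (m+1) = (if q = m + 1 then 1 else 0)" if "q \<in> {1..<m+2}" for q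
    using columns_unit_above[OF assms(1), of "m+1" q] that assms by auto
  have "c j (m+1) (m+2) = (\<Sum>k\<in>{1..n}. M (m+2) k * c j (m+1) k)"
  proof (rule sym, rule trans[OF sum_eq_single_term])
    fix k assume "k \<in> {1..n}" "k \<noteq> m + 2"
    then show "M (m+2) k * c j (m+1) k = 0"
      using assms above_diagonal_zero[of k "m+2"] product_above_factors[of j "m+1" k] by fastforce
  qed (use assms unit_diagonal[of "m+2"] in auto)
  also have "\<dots> = (\<Sum>p\<in>{1..<m+2}. \<Sum>q\<in>{1..<m+2}. M p j * M q (m+1) * c p q (m+2))"
    using assms by (intro structure_eq_below) auto
  also have "\<dots> = (\<Sum>p\<in>{1..<m+2}. M p j * M (m+1) (m+1) * c p (m+1) (m+2))"
    by (intro sum.cong refl sum_eq_single_term) (use unit in auto)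
  also have "\<dots> = M j j * M (m+1) (m+1) * c j (m+1) (m+2) + M m j * M (m+1) (m+1) * c m (m+1) (m+2)"
  proof (rule sum_eq_two_terms)
    fix p assume p: "p \<in> {1..<m+2}" "p \<noteq> j" "p \<noteq> m"
    then consider "p < m" | "p = m + 1" by fastforce
    then show "M p j * M (m+1) (m+1) * c p (m+1) (m+2) = 0"
      by cases (use assms p square_zero[of "m+1" "m+2"] in \<open>auto simp: columns12_unit_above_def\<close>)
  qed (use assms in auto)
  also have "\<dots> = c j (m+1) (m+2) + M m j"
    using assms unit_diagonal[of "m+1"] consecutive_product[of m "m+2"]
    by (auto simp: columns12_unit_above_def)
  finally show ?thesis by simp
qed

(* The same comparison for \<phi>(e_j e_(n-2)) at e_n, where e_(n-1) e_(n-2) = - e_n contributes - M (n-1) j. *)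
lemma columns12_vanish_in_row_before_last:
  assumes "columns12_unit_above (n-1)" "6 \<le> n" "j \<in> {1, 2}"
  shows "M (n-1) j = 0"
proof -
  have unit: "M q i = (if q = i then 1 else 0)" if "q \<in> {1..<n}" "i \<in> {n-3, n-2}" for q i
    using columns_unit_above[OF assms(1), of i q] that assms by auto
  have "n - 3 + 2 = n - 1" "n - 3 + 1 = n - 2" using assms by auto
  then have last_row: "M n (n-1) = 0"
    using unit_column_step[of "n-3" n] unit assms by simp
  have "c j (n-2) n = (\<Sum>k\<in>{1..n}. M n k * c j (n-2) k)"
  proof (rule sym, rule trans[OF sum_eq_single_term])
    fix k assume k: "k \<in> {1..n}" "k \<noteq> n"
    then consider "k \<le> n - 2" | "k = n - 1" by fastforce
    then show "M n k * c j (n-2) k = 0"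
      by cases (use assms k last_row product_above_factors[of j "n-2" k] in auto)
  qed (use assms unit_diagonal[of n] in auto)
  also have "\<dots> = (\<Sum>p\<in>{1..<n}. \<Sum>q\<in>{1..<n}. M p j * M q (n-2) * c p q n)"
    using assms by (intro structure_eq_below) auto
  also have "\<dots> = (\<Sum>p\<in>{1..<n}. M p j * M (n-2) (n-2) * c p (n-2) n)"
    by (intro sum.cong refl sum_eq_single_term) (use unit assms in auto)
  also have "\<dots> = M j j * M (n-2) (n-2) * c j (n-2) n + M (n-1) j * M (n-2) (n-2) * c (n-1) (n-2) n"
    by (rule sum_eq_two_terms) (use assms in \<open>auto simp: columns12_unit_above_def\<close>)
  also have "\<dots> = c j (n-2) n - M (n-1) j"
  proof -
    have "n - 2 + 1 = n - 1" "n - 2 + 2 = n" using assms by auto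
    then have "c (n-2) (n-1) n = 1" using consecutive_product[of "n-2" n] assms by simp
    then have "c (n-1) (n-2) n = - 1" using anticomm[of "n-1" "n-2" n] assms by simp
    then show ?thesis using assms unit_diagonal[of "n-2"] by (auto simp: columns12_unit_above_def)
  qed
  finally show ?thesis by simp
qed

lemma columns12_unit_above_Suc:
  assumes "columns12_unit_above m" "3 \<le> m" "m < n" "6 \<le> n"
  shows "columns12_unit_above (Suc m)"
proof -
  have "M m j = 0" if "j \<in> {1, 2}" for j
  proof (cases "m + 2 \<le> n")
    case True
    then show ?thesis using columns12_vanish_in_row assms that by blast
  next
    case False
    then have "m = n - 1" using assms by simp
    then show ?thesis using columns12_vanish_in_row_before_last assms that by blast
  qed
  then show ?thesis using assms(1,2) by (auto simp: columns12_unit_above_def less_Suc_eq)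
qed

lemma shear_form:
  assumes "6 \<le> n" "M 1 1 = 1" "M 2 1 = 0" "M 1 2 = 0" "M 2 2 = 1"
    and "i \<in> {1..n}" "j \<in> {1..n}"
  shows "M i j = shear_matrix n (M n 1) (M n 2) i j"
proof -
  have "3 \<le> n" using assms by simp
  then have columns12: "columns12_unit_above n"
  proof (induction rule: dec_induct)
    case base
    then show ?case using assms small_nat_intervals(1) by (auto simp: columns12_unit_above_def)
  next
    case (step m)
    then show ?case using columns12_unit_above_Suc assms by blast
  qed
  show ?thesis
  proof (cases "3 \<le> j")
    case True
    then show ?thesis
      using columns_unit_above[OF columns12, of j i] assms by (auto simp: shear_matrix_def)
  next
    case False
    then have "j \<in> {1, 2}" using assms by auto
    then show ?thesis
      using columns12 assms by (cases "i = n") (auto simp: columns12_unit_above_def shear_matrix_def)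
  qed
qed

end

context
  assumes T_hat: "in_T_hat n c"
begin

lemma dim_ge_7: "7 \<le> n"
  using T_hat by (simp add: in_T_hat_def)

lemma T_hat_constants:
  "c 1 3 4 = 0" "c 1 4 5 = 0" "c 1 5 6 = 0" "c 2 4 5 = 0" "c 2 5 6 = 0"
  "c 1 4 6 = 0" "c 2 4 6 = 0" "c 1 3 6 = 0" "c 3 5 6 = 1" "c 1 3 5 \<noteq> 0" "c 4 6 7 \<noteq> 0"
  using T_hat by (auto simp: in_T_hat_def)

lemma small_product_above:
  "1 \<le> p \<Longrightarrow> p \<le> 7 \<Longrightarrow> 1 \<le> q \<Longrightarrow> q \<le> 7 \<Longrightarrow> 1 \<le> t \<Longrightarrow> t \<le> max p q \<Longrightarrow> c p q t = 0"
  using dim_ge_7 by (intro product_above_factors) auto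

lemma small_product_swap:
  "1 \<le> q \<Longrightarrow> q < p \<Longrightarrow> p \<le> 7 \<Longrightarrow> 1 \<le> t \<Longrightarrow> t \<le> 7 \<Longrightarrow> c p q t = - c q p t"
  using dim_ge_7 by (intro anticomm) auto

(* Stated with the premise j = i + 1 so that the simplifier can apply it to terms like c 1 2 k. *)
lemma small_consecutive_product:
  "1 \<le> i \<Longrightarrow> i \<le> 5 \<Longrightarrow> j = i + 1 \<Longrightarrow> 1 \<le> k \<Longrightarrow> k \<le> 7 \<Longrightarrow> c i j k = (if k = i + 2 then 1 else 0)"
  using dim_ge_7 consecutive_product by simp

lemma small_square: "1 \<le> p \<Longrightarrow> p \<le> 7 \<Longrightarrow> 1 \<le> t \<Longrightarrow> t \<le> 7 \<Longrightarrow> c p p t = 0"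
  using dim_ge_7 by (intro square_zero) auto

lemmas small_products =
  T_hat_constants small_product_above small_product_swap small_consecutive_product small_square

lemma small_structure_eq:
  assumes "i \<in> {1..7}" "j \<in> {1..7}" "t \<in> {2..7}"
  shows "(\<Sum>k\<in>{1..t}. M t k * c i j k) = (\<Sum>p\<in>{1..<t}. \<Sum>q\<in>{1..<t}. M p i * M q j * c p q t)"
  using assms dim_ge_7 by (intro structure_eq_upto) auto

lemma small_above_diagonal_zero: "3 \<le> j \<Longrightarrow> j \<le> 7 \<Longrightarrow> 1 \<le> p \<Longrightarrow> p < j \<Longrightarrow> M p j = 0"
  using dim_ge_7 by (intro above_diagonal_zero) auto

lemmas small_simps = small_products small_above_diagonal_zero small_nat_intervals

lemma T_hat_lower_entries:
  assumes "M n n \<noteq> 0"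
  shows "M 2 1 = 0" "M 3 1 = 0" "M 3 2 = 0" "M 4 1 = 0" "M 4 2 = 0" "M 4 3 = 0"
    "M 5 1 = 0" "M 5 3 = 0" "M 6 5 = 0"
proof -
  have nonzero: "M 3 3 \<noteq> 0" "M 4 4 \<noteq> 0" "M 5 5 \<noteq> 0"
    using diagonal_nonzero[OF assms] dim_ge_7 by auto
  show m21: "M 2 1 = 0"
    using small_structure_eq[of 1 3 4] by (simp add: small_simps nonzero del: One_nat_def)
  show m31: "M 3 1 = 0"
    using small_structure_eq[of 1 4 5] by (simp add: small_simps nonzero m21 del: One_nat_def)
  show m32: "M 3 2 = 0"
    using small_structure_eq[of 2 4 5] by (simp add: small_simps nonzero del: One_nat_def)
  show m41: "M 4 1 = 0"
    using small_structure_eq[of 1 5 6] by (simp add: small_simps nonzero m21 m31 del: One_nat_def)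
  show m42: "M 4 2 = 0"
    using small_structure_eq[of 2 5 6] by (simp add: small_simps nonzero m32 del: One_nat_def)
  show m43: "M 4 3 = 0"
    using small_structure_eq[of 1 2 4] by (simp add: small_simps m21 m31 m32 del: One_nat_def)
  show m51: "M 5 1 = 0"
    using small_structure_eq[of 1 4 6] by (simp add: small_simps nonzero m21 m31 m41 del: One_nat_def)
  show "M 5 3 = 0"
    using small_structure_eq[of 1 2 5] by (simp add: small_simps m21 m31 m32 m41 m42 del: One_nat_def)
  show "M 6 5 = 0"
    using small_structure_eq[of 1 3 6] by (simp add: small_simps m21 m31 m41 m51 m43 del: One_nat_def)
qed

lemma T_hat_unit_block:
  assumes "M n n \<noteq> 0"
  shows "M 1 1 = 1" "M 2 1 = 0" "M 1 2 = 0" "M 2 2 = 1" "M 3 3 = 1" "M 4 4 = 1"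
proof -
  note lower = T_hat_lower_entries[OF assms]
  have nonzero: "M 3 3 \<noteq> 0" "M 4 4 \<noteq> 0" "M 5 5 \<noteq> 0" "M 6 6 \<noteq> 0"
    using diagonal_nonzero[OF assms] dim_ge_7 by auto
  (* eq_ijt is the e_t-coordinate of \<phi>(e_i e_j) = \<phi>(e_i) \<phi>(e_j). *)
  have eq_123: "M 3 3 = M 1 1 * M 2 2 - M 2 1 * M 1 2"
    using small_structure_eq[of 1 2 3] by (simp add: small_simps lower del: One_nat_def)
  have eq_234: "M 4 4 = M 2 2 * M 3 3"
    using small_structure_eq[of 2 3 4] by (simp add: small_simps lower del: One_nat_def)
  have eq_235: "M 5 4 = M 1 2 * M 3 3 * c 1 3 5"
    using small_structure_eq[of 2 3 5] by (simp add: small_simps lower del: One_nat_def)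
  have eq_356: "M 6 6 = M 5 5 * M 3 3"
    using small_structure_eq[of 3 5 6] by (simp add: small_simps lower del: One_nat_def)
  have eq_346: "M 3 3 * M 5 4 = M 4 4 * M 5 3"
    using small_structure_eq[of 3 4 6] by (simp add: small_simps lower del: One_nat_def)
  have eq_467: "M 7 7 * c 4 6 7 = M 4 4 * M 6 6 * c 4 6 7 + M 5 4 * M 6 6"
    using small_structure_eq[of 4 6 7] by (simp add: small_simps lower del: One_nat_def)
  have d5: "M 5 5 = M 3 3 * M 4 4" and d6: "M 6 6 = M 4 4 * M 5 5" and d7: "M 7 7 = M 5 5 * M 6 6"
    using diagonal_recursion[of 3] diagonal_recursion[of 4] diagonal_recursion[of 5] dim_ge_7 by simp_all
  have "M 3 3 = M 4 4" using eq_356 d6 nonzero by (simp add: mult.commute)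
  then show "M 2 2 = 1" using eq_234 nonzero by simp
  have "M 5 4 = 0" using eq_346 lower nonzero by simp
  then show "M 1 2 = 0" using eq_235 nonzero T_hat_constants by simp
  have "M 7 7 = M 4 4 * M 6 6" using eq_467 \<open>M 5 4 = 0\<close> T_hat_constants by simp
  then have "M 5 5 = M 4 4" using d7 nonzero by simp
  then show "M 3 3 = 1" using d5 nonzero by simp
  then show "M 4 4 = 1" using \<open>M 3 3 = M 4 4\<close> by simp
  show "M 1 1 = 1" using eq_123 \<open>M 3 3 = 1\<close> \<open>M 2 2 = 1\<close> lower by simp
  show "M 2 1 = 0" by (fact lower)
qed

end

end

theorem mainTheorem18:
  fixes n :: nat and c :: "nat \<Rightarrow> nat \<Rightarrow> nat \<Rightarrow> complex"
  assumes "7 \<le> n" and "in_T_hat n c"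
  shows "is_automorphism n c M \<longleftrightarrow>
    (\<exists>\<alpha> \<beta> :: complex. \<forall>i\<in>{1..n}. \<forall>j\<in>{1..n}.
       M i j = (if i = j then 1
                else if i = n \<and> j = 1 then \<alpha>
                else if i = n \<and> j = 2 then \<beta> else 0))"
proof -
  interpret T'_algebra n c
    using assms(2) by unfold_locales (simp add: in_T_hat_def)
  have "is_automorphism n c M \<longleftrightarrow>
      (\<exists>\<alpha> \<beta>. \<forall>i\<in>{1..n}. \<forall>j\<in>{1..n}. M i j = shear_matrix n \<alpha> \<beta> i j)"
  proof
    assume aut: "is_automorphism n c M"
    then interpret T'_endomorphism n c M
      by unfold_locales (simp add: is_automorphism_def)
    have "M n n \<noteq> 0"
      using aut last_diagonal_nonzero by (simp add: is_automorphism_def bij_betw_def)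
    note unit = T_hat_unit_block[OF assms(2) this]
    have "M i j = shear_matrix n (M n 1) (M n 2) i j" if "i \<in> {1..n}" "j \<in> {1..n}" for i j
      using shear_form[OF diagonal_one[OF unit(5,6)] _ unit(1-4) that] assms(1) by simp
    then show "\<exists>\<alpha> \<beta>. \<forall>i\<in>{1..n}. \<forall>j\<in>{1..n}. M i j = shear_matrix n \<alpha> \<beta> i j" by blast
  next
    assume "\<exists>\<alpha> \<beta>. \<forall>i\<in>{1..n}. \<forall>j\<in>{1..n}. M i j = shear_matrix n \<alpha> \<beta> i j"
    then obtain \<alpha> \<beta> where "\<forall>i\<in>{1..n}. \<forall>j\<in>{1..n}. M i j = shear_matrix n \<alpha> \<beta> i j"
      by blast
    then show "is_automorphism n c M"
      using is_automorphism_cong[of n M "shear_matrix n \<alpha> \<beta>" c] shear_matrix_automorphism by blast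
  qed
  then show ?thesis by (simp add: shear_matrix_def)
qed

end
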